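(* Let $S$ be a solid and let $x,y,z\in S$. If $y$ and $z$ are of the same sign (both positive or both negative), then $x(y+z)=xy+xz$.
   Context: A solid is a set $S$ with two binary operations $+$ and $\cdot$ (written $xy$) and a binary relation $\le$ satisfying the following axioms (all variables range over $S$). (A1) $+$ is associative and commutative. (A2) For each $x$ there is $e$ with $x+e=x$ such that $e+f=e$ for every $f$ with $x+f=x$; this $e$ is unique and is denoted $e(x)$ (the magnitude of $x$). An element $x$ with $x=e(x)$ is called a magnitude. (A3) For each $x$ there is $s$ with $x+s=e(x)$ and $e(s)=e(x)$; it is unique and denoted $-x$; write $x-y$ for $x+(-y)$. (A4) $e(x+y)=e(x)$ or $e(x+y)=e(y)$. (M1) $\cdot$ is associative and commutative. (M2) For each $x\neq e(x)$ there is $u$ with $xu=x$ such that $uv=u$ for every $v$ with $xv=x$; it is unique and denoted $u(x)$. (M3) For each $x\ne e(x)$ there is $d$ with $xd=u(x)$ and $u(d)=u(x)$; it is unique and denoted $x^{-1}$; write $y/x$ for $yx^{-1}$. (M4) If $x\neq e(x)$ and $y\ne e(y)$ then $u(xy)=u(x)$ or $u(xy)=u(y)$. (O1) $\le$ is a total order (reflexive, antisymmetric, transitive, total); $x<y$ means $x\le y$ and $x\ne y$. (O2) $x\le y\Rightarrow x+z\le y+z$. (O3) $y+e(x)=e(x)\Rightarrow (y\le e(x)$ and $-y\le e(x))$. (O4) $(e(x)<x$ and $y\le z)\Rightarrow xy\le xz$. (O5) $e(y)\le y\le z\Rightarrow e(x)y\le e(x)z$. (AM1) For all $x,y$ there is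 $z$ with $e(x)y=e(z)$. (AM2) $e(xy)=e(x)y+e(y)x$. (AM3) If $x\ne e(x)$ then $e(u(x))=e(x)/x$. (AM4) (distributivity axiom) $xy+xz=x(y+z)+e(x)y+e(x)z$. (AM5) $-(xy)=(-x)y$. (E1) There is $m$ with $m+x=x$ for all $x$; it is unique, called zero and denoted $0$. (E2) There is $u$ with $ux=x$ for all $x$; it is unique, called one and denoted $1$. (E3) There is $M$ with $e(x)+M=M$ for all $x$. (E4) There is $x$ with $e(x)\ne 0$ and $e(x)\ne M$. (E5) For every $x$ there is $a$ with $x=a+e(x)$ and $e(a)=0$. (E6) If $x,y$ are magnitudes with $x<y$, there is $z$ with $z\ne e(z)$ and $x<z<y$. Further notation: $S^*=\{x\in S: x\ne e(x)\}$ (zeroless elements). $x$ is positive if $e(x)\le x$ and negative if $x<e(x)$; $|x|=x$ if $x$ is positive and $|x|=-x$ if $x$ is negative. $x$ is precise if $e(x)=0$. The relative uncertainty $R(x)$ is $e(u(x))$ if $x\ne e(x)$, and $M$ (from (E3)) if $x=e(x)$. *)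

theory Defs
  imports Main
begin

text \<open>A solid is a type 'a (the set S) with addition pl, multiplication tm and order le.
  Derived operations are defined by definite description from the axioms.\<close>

definition mag :: "('a \<Rightarrow> 'a \<Rightarrow> 'a) \<Rightarrow> 'a \<Rightarrow> 'a" where
  "mag pl x = (THE e. pl x e = x \<and> (\<forall>f. pl x f = x \<longrightarrow> pl e f = e))"

definition neg :: "('a \<Rightarrow> 'a \<Rightarrow> 'a) \<Rightarrow> 'a \<Rightarrow> 'a" where
  "neg pl x = (THE s. pl x s = mag pl x \<and> mag pl s = mag pl x)"

definition unt :: "('a \<Rightarrow> 'a \<Rightarrow> 'a) \<Rightarrow> 'a \<Rightarrow> 'a" where
  "unt tm x = (THE u. tm x u = x \<and> (\<forall>v. tm x v = x \<longrightarrow> tm u v = u))"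

definition inv :: "('a \<Rightarrow> 'a \<Rightarrow> 'a) \<Rightarrow> 'a \<Rightarrow> 'a" where
  "inv tm x = (THE d. tm x d = unt tm x \<and> unt tm d = unt tm x)"

definition zer :: "('a \<Rightarrow> 'a \<Rightarrow> 'a) \<Rightarrow> 'a" where
  "zer pl = (THE m. \<forall>x. pl m x = x)"

definition solid :: "('a \<Rightarrow> 'a \<Rightarrow> 'a) \<Rightarrow> ('a \<Rightarrow> 'a \<Rightarrow> 'a) \<Rightarrow> ('a \<Rightarrow> 'a \<Rightarrow> bool) \<Rightarrow> bool" where
  "solid pl tm le \<longleftrightarrow>
    \<comment> \<open>A1\<close>
    (\<forall>x y z. pl (pl x y) z = pl x (pl y z)) \<and> (\<forall>x y. pl x y = pl y x) \<and>
    \<comment> \<open>A2\<close>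
    (\<forall>x. \<exists>e. pl x e = x \<and> (\<forall>f. pl x f = x \<longrightarrow> pl e f = e)) \<and>
    \<comment> \<open>A3\<close>
    (\<forall>x. \<exists>!s. pl x s = mag pl x \<and> mag pl s = mag pl x) \<and>
    \<comment> \<open>A4\<close>
    (\<forall>x y. mag pl (pl x y) = mag pl x \<or> mag pl (pl x y) = mag pl y) \<and>
    \<comment> \<open>M1\<close>
    (\<forall>x y z. tm (tm x y) z = tm x (tm y z)) \<and> (\<forall>x y. tm x y = tm y x) \<and>
    \<comment> \<open>M2\<close>
    (\<forall>x. x \<noteq> mag pl x \<longrightarrow> (\<exists>u. tm x u = x \<and> (\<forall>v. tm x v = x \<longrightarrow> tm u v = u))) \<and>
    \<comment> \<open>M3\<close>
    (\<forall>x. x \<noteq> mag pl x \<longrightarrow> (\<exists>!d. tm x d = unt tm x \<and> unt tm d = unt tm x)) \<and>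
    \<comment> \<open>M4\<close>
    (\<forall>x y. x \<noteq> mag pl x \<longrightarrow> y \<noteq> mag pl y \<longrightarrow>
        unt tm (tm x y) = unt tm x \<or> unt tm (tm x y) = unt tm y) \<and>
    \<comment> \<open>O1\<close>
    (\<forall>x. le x x) \<and> (\<forall>x y. le x y \<longrightarrow> le y x \<longrightarrow> x = y) \<and>
    (\<forall>x y z. le x y \<longrightarrow> le y z \<longrightarrow> le x z) \<and> (\<forall>x y. le x y \<or> le y x) \<and>
    \<comment> \<open>O2\<close>
    (\<forall>x y z. le x y \<longrightarrow> le (pl x z) (pl y z)) \<and>
    \<comment> \<open>O3\<close>
    (\<forall>x y. pl y (mag pl x) = mag pl x \<longrightarrow> le y (mag pl x) \<and> le (neg pl y) (mag pl x)) \<and>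
    \<comment> \<open>O4\<close>
    (\<forall>x y z. (le (mag pl x) x \<and> mag pl x \<noteq> x \<and> le y z) \<longrightarrow> le (tm x y) (tm x z)) \<and>
    \<comment> \<open>O5\<close>
    (\<forall>x y z. le (mag pl y) y \<longrightarrow> le y z \<longrightarrow> le (tm (mag pl x) y) (tm (mag pl x) z)) \<and>
    \<comment> \<open>AM1\<close>
    (\<forall>x y. \<exists>z. tm (mag pl x) y = mag pl z) \<and>
    \<comment> \<open>AM2\<close>
    (\<forall>x y. mag pl (tm x y) = pl (tm (mag pl x) y) (tm (mag pl y) x)) \<and>
    \<comment> \<open>AM3\<close>
    (\<forall>x. x \<noteq> mag pl x \<longrightarrow> mag pl (unt tm x) = tm (mag pl x) (inv tm x)) \<and>
    \<comment> \<open>AM4\<close>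
    (\<forall>x y z. pl (tm x y) (tm x z) = pl (pl (tm x (pl y z)) (tm (mag pl x) y)) (tm (mag pl x) z)) \<and>
    \<comment> \<open>AM5\<close>
    (\<forall>x y. neg pl (tm x y) = tm (neg pl x) y) \<and>
    \<comment> \<open>E1\<close>
    (\<exists>m. \<forall>x. pl m x = x) \<and>
    \<comment> \<open>E2\<close>
    (\<exists>u. \<forall>x. tm u x = x) \<and>
    \<comment> \<open>E3 and E4 (E4 refers to the M of E3)\<close>
    (\<exists>M. (\<forall>x. pl (mag pl x) M = M) \<and> (\<exists>x. mag pl x \<noteq> zer pl \<and> mag pl x \<noteq> M)) \<and>
    \<comment> \<open>E5\<close>
    (\<forall>x. \<exists>a. x = pl a (mag pl x) \<and> mag pl a = zer pl) \<and>
    \<comment> \<open>E6\<close>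
    (\<forall>x y. x = mag pl x \<longrightarrow> y = mag pl y \<longrightarrow> le x y \<longrightarrow> x \<noteq> y \<longrightarrow>
        (\<exists>z. z \<noteq> mag pl z \<and> le x z \<and> x \<noteq> z \<and> le z y \<and> z \<noteq> y))"

definition positive :: "('a \<Rightarrow> 'a \<Rightarrow> 'a) \<Rightarrow> ('a \<Rightarrow> 'a \<Rightarrow> bool) \<Rightarrow> 'a \<Rightarrow> bool" where
  "positive pl le x \<longleftrightarrow> le (mag pl x) x"

definition negative :: "('a \<Rightarrow> 'a \<Rightarrow> 'a) \<Rightarrow> ('a \<Rightarrow> 'a \<Rightarrow> bool) \<Rightarrow> 'a \<Rightarrow> bool" where
  "negative pl le x \<longleftrightarrow> le x (mag pl x) \<and> x \<noteq> mag pl x"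

end

theory Submission
  imports Defs
begin

text \<open>The distributivity axiom AM4 reads \<open>xy + xz = x(y+z) + e(x)y + e(x)z\<close>, so it suffices that
  the two correction terms are absorbed by \<open>x(y+z)\<close>. Both are magnitudes, and by AM2 the
  magnitude of \<open>x(y+z)\<close> contains the summand \<open>e(x)(y+z)\<close>. For positive \<open>y, z\<close> monotonicity (O5)
  gives \<open>e(x)y \<le> e(x)(y+z)\<close> and \<open>e(x)z \<le> e(x)(y+z)\<close>; for negative \<open>y, z\<close> the same holds after
  passing to \<open>-y, -z\<close>, which does not change \<open>e(x)y\<close>, \<open>e(x)z\<close> or \<open>e(x)(y+z)\<close>. Finally, of two
  comparable magnitudes the larger absorbs the smaller.\<close>

locale solid_core =
  fixes pl tm :: "'a \<Rightarrow> 'a \<Rightarrow> 'a" and le :: "'a \<Rightarrow> 'a \<Rightarrow> bool"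
  assumes add_assoc: "pl (pl x y) z = pl x (pl y z)"
    and add_commute: "pl x y = pl y x"
    and mag_exists: "\<exists>e. pl x e = x \<and> (\<forall>f. pl x f = x \<longrightarrow> pl e f = e)"
    and neg_exists_unique: "\<exists>!s. pl x s = mag pl x \<and> mag pl s = mag pl x"
    and mag_add_cases: "mag pl (pl x y) = mag pl x \<or> mag pl (pl x y) = mag pl y"
    and mult_commute: "tm x y = tm y x"
    and le_antisym: "le x y \<Longrightarrow> le y x \<Longrightarrow> x = y"
    and le_trans: "le x y \<Longrightarrow> le y z \<Longrightarrow> le x z"
    and add_right_mono: "le x y \<Longrightarrow> le (pl x z) (pl y z)"
    \<comment> \<open>explicit quantifier order, so that the axioms O3 and O5 of \<^const>\<open>solid\<close> match syntactically\<close>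
    and le_mag_if_absorbed: "\<And>x y. pl y (mag pl x) = mag pl x \<Longrightarrow> le y (mag pl x)"
    and mult_mag_mono: "\<And>x y z. le (mag pl y) y \<Longrightarrow> le y z \<Longrightarrow> le (tm (mag pl x) y) (tm (mag pl x) z)"
    and mult_mag_is_mag: "\<exists>z. tm (mag pl x) y = mag pl z"
    and mag_mult: "mag pl (tm x y) = pl (tm (mag pl x) y) (tm (mag pl y) x)"
    and distrib_defect: "pl (tm x y) (tm x z) = pl (pl (tm x (pl y z)) (tm (mag pl x) y)) (tm (mag pl x) z)"
    and neg_mult: "neg pl (tm x y) = tm (neg pl x) y"
    and zero_exists: "\<exists>m. \<forall>x. pl m x = x"

lemma solid_imp_solid_core: "solid pl tm le \<Longrightarrow> solid_core pl tm le"
  unfolding solid_def solid_core_def by (elim conjE) (intro conjI; (assumption | metis))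

context solid_core
begin

lemma mag_exists_unique: "\<exists>!e. pl x e = x \<and> (\<forall>f. pl x f = x \<longrightarrow> pl e f = e)"
proof -
  obtain e where e: "pl x e = x \<and> (\<forall>f. pl x f = x \<longrightarrow> pl e f = e)"
    using mag_exists by blast
  show ?thesis
  proof (rule ex1I[of _ e])
    fix e' assume "pl x e' = x \<and> (\<forall>f. pl x f = x \<longrightarrow> pl e' f = e')"
    with e show "e' = e" by (metis add_commute)
  qed (rule e)
qed

lemma add_mag: "pl x (mag pl x) = x"
  and mag_absorbs: "pl x f = x \<Longrightarrow> pl (mag pl x) f = mag pl x"
  using theI'[OF mag_exists_unique[of x]] unfolding mag_def[symmetric] by auto

lemma mag_eqI: "pl x e = x \<Longrightarrow> (\<And>f. pl x f = x \<Longrightarrow> pl e f = e) \<Longrightarrow> mag pl x = e"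
  using mag_exists_unique[of x] add_mag mag_absorbs by blast

lemma add_neg: "pl x (neg pl x) = mag pl x"
  and mag_neg: "mag pl (neg pl x) = mag pl x"
  using theI'[OF neg_exists_unique[of x]] unfolding neg_def[symmetric] by auto

lemma neg_eqI: "pl x s = mag pl x \<Longrightarrow> mag pl s = mag pl x \<Longrightarrow> neg pl x = s"
  using neg_exists_unique[of x] add_neg mag_neg by blast

lemma zero_add: "pl (zer pl) x = x"
proof -
  have "\<exists>!m. \<forall>x. pl m x = x"
    using zero_exists by (metis add_commute)
  then show ?thesis
    unfolding zer_def by (rule theI'[THEN spec])
qed

definition is_magnitude :: "'a \<Rightarrow> bool" where
  "is_magnitude p \<longleftrightarrow> mag pl p = p"

lemma add_idem_magnitude: "is_magnitude p \<Longrightarrow> pl p p = p"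
  using add_mag[of p] unfolding is_magnitude_def by simp

lemma is_magnitude_mag: "is_magnitude (mag pl x)"
proof -
  have "pl (mag pl x) (mag pl x) = mag pl x"
    using mag_absorbs[OF add_mag] .
  then show ?thesis
    unfolding is_magnitude_def by (intro mag_eqI) auto
qed

lemma is_magnitude_mult_mag: "is_magnitude (tm (mag pl x) y)"
  using mult_mag_is_mag[of x y] is_magnitude_mag by metis

text \<open>By A4 the magnitude of \<open>p + q\<close> is \<open>p\<close> or \<open>q\<close>, and that summand absorbs \<open>p + q\<close>.\<close>

lemma add_magnitudes_cases:
  assumes p: "is_magnitude p" and q: "is_magnitude q"
  shows "pl p q = p \<or> pl p q = q"
proof -
  let ?s = "pl p q"
  have "pl ?s ?s = ?s"
    using add_idem_magnitude[OF p] add_idem_magnitude[OF q] by (metis add_assoc add_commute)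
  then have absorbs: "pl (mag pl ?s) ?s = mag pl ?s"
    by (rule mag_absorbs)
  have "pl p ?s = ?s" "pl q ?s = ?s"
    using add_idem_magnitude[OF p] add_idem_magnitude[OF q] by (metis add_assoc add_commute)+
  moreover have "mag pl ?s = p \<or> mag pl ?s = q"
    using mag_add_cases[of p q] p q unfolding is_magnitude_def by simp
  ultimately show ?thesis
    using absorbs by auto
qed

lemma add_magnitude_absorb_le:
  assumes p: "is_magnitude p" and q: "is_magnitude q" and "le p q"
  shows "pl q p = q"
  using add_magnitudes_cases[OF p q]
proof
  assume "pl p q = p"
  then have "le q p"
    using le_mag_if_absorbed[of q p] p unfolding is_magnitude_def by (simp add: add_commute)
  with \<open>le p q\<close> have "p = q"
    by (rule le_antisym)
  then show ?thesis
    using add_idem_magnitude[OF q] by simp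
qed (simp add: add_commute)

lemma mag_add: "mag pl (pl a b) = pl (mag pl a) (mag pl b)"
proof -
  let ?m = "pl (mag pl a) (mag pl b)"
  have "pl (pl a b) ?m = pl a b"
    using add_mag[of a] add_mag[of b] by (metis add_assoc add_commute)
  then have absorbs: "pl (mag pl (pl a b)) ?m = mag pl (pl a b)"
    by (rule mag_absorbs)
  have "pl (mag pl a) ?m = ?m" "pl (mag pl b) ?m = ?m"
    using add_idem_magnitude[OF is_magnitude_mag[of a]] add_idem_magnitude[OF is_magnitude_mag[of b]]
    by (metis add_assoc add_commute)+
  with mag_add_cases[of a b] absorbs show ?thesis
    by auto
qed

lemma neg_add: "neg pl (pl y z) = pl (neg pl y) (neg pl z)"
proof (rule neg_eqI)
  show "pl (pl y z) (pl (neg pl y) (neg pl z)) = mag pl (pl y z)"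
    using add_neg[of y] add_neg[of z] mag_add[of y z] by (metis add_assoc add_commute)
  show "mag pl (pl (neg pl y) (neg pl z)) = mag pl (pl y z)"
    using mag_add mag_neg by metis
qed

lemma neg_magnitude: "is_magnitude p \<Longrightarrow> neg pl p = p"
  by (rule neg_eqI) (auto simp: is_magnitude_def add_idem_magnitude)

lemma mult_mag_neg: "tm (mag pl x) (neg pl y) = tm (mag pl x) y"
proof -
  have "tm (mag pl x) (neg pl y) = neg pl (tm y (mag pl x))"
    by (simp add: neg_mult mult_commute)
  also have "\<dots> = tm (mag pl x) y"
    using neg_magnitude[OF is_magnitude_mult_mag] by (simp add: mult_commute)
  finally show ?thesis .
qed

lemma zero_le_mag: "le (zer pl) (mag pl x)"
  using le_mag_if_absorbed[of "zer pl" x] zero_add by blast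

lemma le_add_positive:
  assumes "le (mag pl b) b"
  shows "le a (pl a b)"
proof -
  have "le (pl (zer pl) a) (pl (mag pl b) a)"
    by (rule add_right_mono[OF zero_le_mag])
  moreover have "le (pl (mag pl b) a) (pl b a)"
    by (rule add_right_mono[OF assms])
  ultimately show ?thesis
    using le_trans zero_add add_commute by metis
qed

lemma positive_neg_if_negative:
  assumes "le y (mag pl y)"
  shows "le (mag pl (neg pl y)) (neg pl y)"
proof -
  have "le (pl y (neg pl y)) (pl (mag pl y) (neg pl y))"
    using assms by (rule add_right_mono)
  moreover have "pl (mag pl y) (neg pl y) = neg pl y"
    using add_mag[of "neg pl y"] mag_neg[of y] by (simp add: add_commute)
  ultimately show ?thesis
    using add_neg mag_neg by simp
qed

lemma mult_mag_le_add_positive: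
  "le (mag pl y) y \<Longrightarrow> le (mag pl z) z \<Longrightarrow> le (tm (mag pl x) y) (tm (mag pl x) (pl y z))"
  using mult_mag_mono le_add_positive by blast

lemma mult_mag_le_add_same_sign:
  assumes "(positive pl le y \<and> positive pl le z) \<or> (negative pl le y \<and> negative pl le z)"
  shows "le (tm (mag pl x) y) (tm (mag pl x) (pl y z))"
  using assms
proof
  assume "positive pl le y \<and> positive pl le z"
  then show ?thesis
    unfolding positive_def by (blast intro: mult_mag_le_add_positive)
next
  assume "negative pl le y \<and> negative pl le z"
  then have "le (mag pl (neg pl y)) (neg pl y)" "le (mag pl (neg pl z)) (neg pl z)"
    unfolding negative_def by (auto intro: positive_neg_if_negative)
  then have "le (tm (mag pl x) (neg pl y)) (tm (mag pl x) (pl (neg pl y) (neg pl z)))"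
    by (rule mult_mag_le_add_positive)
  then show ?thesis
    by (metis mult_mag_neg neg_add)
qed

lemma distrib_if_mag_absorbs:
  assumes "pl (tm (mag pl x) (pl y z)) (tm (mag pl x) y) = tm (mag pl x) (pl y z)"
    and "pl (tm (mag pl x) (pl y z)) (tm (mag pl x) z) = tm (mag pl x) (pl y z)"
  shows "tm x (pl y z) = pl (tm x y) (tm x z)"
proof -
  let ?w = "tm x (pl y z)" and ?c = "pl (tm (mag pl x) y) (tm (mag pl x) z)"
  have "pl (mag pl ?w) ?c = mag pl ?w"
    unfolding mag_mult using assms by (metis add_assoc add_commute)
  then have "pl ?w ?c = ?w"
    using add_mag[of ?w] by (metis add_assoc)
  then show ?thesis
    using distrib_defect[of x y z] by (metis add_assoc)
qed

lemma distrib_same_sign: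
  assumes "(positive pl le y \<and> positive pl le z) \<or> (negative pl le y \<and> negative pl le z)"
  shows "tm x (pl y z) = pl (tm x y) (tm x z)"
proof (rule distrib_if_mag_absorbs)
  show "pl (tm (mag pl x) (pl y z)) (tm (mag pl x) y) = tm (mag pl x) (pl y z)"
    by (rule add_magnitude_absorb_le[OF is_magnitude_mult_mag is_magnitude_mult_mag
          mult_mag_le_add_same_sign[OF assms]])
  have "(positive pl le z \<and> positive pl le y) \<or> (negative pl le z \<and> negative pl le y)"
    using assms by blast
  then have "pl (tm (mag pl x) (pl z y)) (tm (mag pl x) z) = tm (mag pl x) (pl z y)"
    by (rule add_magnitude_absorb_le[OF is_magnitude_mult_mag is_magnitude_mult_mag
          mult_mag_le_add_same_sign])
  then show "pl (tm (mag pl x) (pl y z)) (tm (mag pl x) z) = tm (mag pl x) (pl y z)"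
    by (simp only: add_commute[of z y])
qed

end

theorem mainTheorem4:
  fixes pl tm :: "'a \<Rightarrow> 'a \<Rightarrow> 'a" and le :: "'a \<Rightarrow> 'a \<Rightarrow> bool" and x y z :: 'a
  assumes "solid pl tm le"
    and "(positive pl le y \<and> positive pl le z) \<or> (negative pl le y \<and> negative pl le z)"
  shows "tm x (pl y z) = pl (tm x y) (tm x z)"
proof -
  interpret solid_core pl tm le
    using assms(1) by (rule solid_imp_solid_core)
  show ?thesis
    using assms(2) by (rule distrib_same_sign)
qed

end
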